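(* The equation \[ V=1+\frac{y}{x}-\frac{1}{x}V-V_x-\frac{1}{x}V_y+\frac{1}{x}\log V \] has one and only one solution $V$ in the ring $A$ (with $V\in U$, so that $\log V$ is defined).
   Context: Let $A$ be the ring of formal series $a=\sum_{n=0}^\infty \frac{q_n(y)}{x^n}$, where each $q_n$ is a polynomial with complex coefficients of degree at most $n$ (so $q_0$ is a constant), with the obvious addition and multiplication (equivalently $A\cong\mathbb{C}[[X,Y]]$ via $X\mapsto x^{-1}$, $Y\mapsto y x^{-1}$). For nonzero $a$ let $\deg(a)$ be the least $n$ with $q_n\neq0$, $\deg(0)=\infty$, and give $A$ the complete metric induced by $\|a\|=2^{-\deg(a)}$. Formal derivatives: $a_x=-\sum_{n\ge1}\frac{n q_n(y)}{x^{n+1}}$, $a_y=\sum_{n\ge1}\frac{q_n'(y)}{x^n}$. Let $U\subset A$ be the set of elements with $q_0=1$; for $1+u\in U$ define $\log(1+u)=\sum_{k\ge1}(-1)^{k+1}\frac{u^k}{k}$ (convergent in $A$). *)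

theory Defs
  imports Complex_Main
begin

text \<open>An element a = sum_n q_n(y)/x^n of the ring A is represented by its coefficient
  array c, where c n k is the coefficient of y^k in q_n (i.e. of y^k x^(-n)).\<close>

type_synonym ser = "nat \<Rightarrow> nat \<Rightarrow> complex"

definition inA :: "ser \<Rightarrow> bool" where
  "inA a \<longleftrightarrow> (\<forall>n k. n < k \<longrightarrow> a n k = 0)"

definition one_A :: ser where
  "one_A = (\<lambda>n k. if n = 0 \<and> k = 0 then 1 else 0)"

definition add_A :: "ser \<Rightarrow> ser \<Rightarrow> ser" where
  "add_A a b = (\<lambda>n k. a n k + b n k)"

definition sub_A :: "ser \<Rightarrow> ser \<Rightarrow> ser" where
  "sub_A a b = (\<lambda>n k. a n k - b n k)"

definition smult_A :: "complex \<Rightarrow> ser \<Rightarrow> ser" where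
  "smult_A c a = (\<lambda>n k. c * a n k)"

definition mult_A :: "ser \<Rightarrow> ser \<Rightarrow> ser" where
  "mult_A a b = (\<lambda>n k. \<Sum>i\<le>n. \<Sum>j\<le>k. a i j * b (n - i) (k - j))"

fun pow_A :: "ser \<Rightarrow> nat \<Rightarrow> ser" where
  "pow_A a 0 = one_A"
| "pow_A a (Suc m) = mult_A a (pow_A a m)"

definition divx_A :: "ser \<Rightarrow> ser" where
  "divx_A a = (\<lambda>n k. if n = 0 then 0 else a (n - 1) k)"

definition yx_A :: ser where
  "yx_A = (\<lambda>n k. if n = 1 \<and> k = 1 then 1 else 0)"

text \<open>Formal derivative a_x = - sum_(n\<ge>1) n q_n(y) / x^(n+1).\<close>
definition dx_A :: "ser \<Rightarrow> ser" where
  "dx_A a = (\<lambda>n k. if n = 0 then 0 else - of_nat (n - 1) * a (n - 1) k)"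

definition dy_A :: "ser \<Rightarrow> ser" where
  "dy_A a = (\<lambda>n k. of_nat (k + 1) * a n (k + 1))"

text \<open>deg(a) \<ge> n+1, i.e. q_0 = ... = q_n = 0; so dist(a,b) \<le> 2^(-(n+1)) iff
  agree_upto n a b.\<close>
definition agree_upto :: "nat \<Rightarrow> ser \<Rightarrow> ser \<Rightarrow> bool" where
  "agree_upto n a b \<longleftrightarrow> (\<forall>i\<le>n. \<forall>k. a i k = b i k)"

text \<open>Convergence of a sequence in the metric ||a|| = 2^(-deg a).\<close>
definition conv_A :: "(nat \<Rightarrow> ser) \<Rightarrow> ser \<Rightarrow> bool" where
  "conv_A S L \<longleftrightarrow> (\<forall>n. \<exists>N0. \<forall>N\<ge>N0. agree_upto n (S N) L)"

text \<open>Partial sums of log(1+u) = sum_(k\<ge>1) (-1)^(k+1) u^k / k, with u = V - 1.\<close>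
definition log_partial :: "ser \<Rightarrow> nat \<Rightarrow> ser" where
  "log_partial V N = (\<lambda>n j. \<Sum>k\<in>{1..N}.
      ((-1) ^ (k + 1) / of_nat k) * pow_A (sub_A V one_A) k n j)"

definition log_A :: "ser \<Rightarrow> ser" where
  "log_A V = (THE L. conv_A (log_partial V) L)"

definition inU :: "ser \<Rightarrow> bool" where
  "inU a \<longleftrightarrow> inA a \<and> a 0 0 = 1"

end

theory Submission
  imports Defs
begin

text \<open>Every term on the right-hand side that involves \<open>V\<close> raises the degree by one: \<open>V\<^sub>x\<close>
  does so itself, the other terms carry a factor \<open>1/x\<close>, and the coefficients of \<open>log V\<close> up to
  degree \<open>n\<close> depend only on those of \<open>V\<close> up to degree \<open>n\<close>. Hence the right-hand side is a
  contraction of \<open>U\<close> for the metric \<open>2\<^sup>-\<^sup>d\<^sup>e\<^sup>g\<close>, and the Banach fixed point argument gives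
  exactly one solution.\<close>

lemma agree_upto_mono: "agree_upto n a b \<Longrightarrow> m \<le> n \<Longrightarrow> agree_upto m a b"
  unfolding agree_upto_def by auto

lemma agree_upto_trans: "agree_upto n a b \<Longrightarrow> agree_upto n b c \<Longrightarrow> agree_upto n a c"
  unfolding agree_upto_def by auto

lemma agree_upto_all_eq: "(\<And>n. agree_upto n a b) \<Longrightarrow> a = b"
  unfolding agree_upto_def by (intro ext) blast

lemma conv_A_unique:
  assumes "conv_A S L" "conv_A S L'"
  shows "L = L'"
proof (rule agree_upto_all_eq)
  fix n
  obtain N1 where "\<forall>N\<ge>N1. agree_upto n (S N) L" using assms(1) unfolding conv_A_def by blast
  moreover obtain N2 where "\<forall>N\<ge>N2. agree_upto n (S N) L'" using assms(2) unfolding conv_A_def by blast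
  ultimately have "agree_upto n (S (max N1 N2)) L" "agree_upto n (S (max N1 N2)) L'" by auto
  then show "agree_upto n L L'" unfolding agree_upto_def by auto
qed

lemma agree_upto_chain:
  assumes "\<And>m. agree_upto m (S m) (S (Suc m))" "i \<le> m"
  shows "agree_upto i (S i) (S m)"
  using assms(2)
proof (induction m rule: dec_induct)
  case base show ?case by (simp add: agree_upto_def)
next
  case (step m)
  then show ?case using agree_upto_trans agree_upto_mono[OF assms(1)] by blast
qed

lemma agree_upto_diagonal:
  assumes "\<And>m. agree_upto m (S m) (S (Suc m))"
  shows "agree_upto n (\<lambda>i. S i i) (S n)"
  using agree_upto_chain[OF assms] unfolding agree_upto_def by auto

lemma contraction_fixpoint_unique:
  assumes contract: "\<And>V W n. P V \<Longrightarrow> P W \<Longrightarrow> agree_upto n V W \<Longrightarrow> agree_upto (Suc n) (T V) (T W)"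
    and agree0: "\<And>V W. P V \<Longrightarrow> P W \<Longrightarrow> agree_upto 0 V W"
    and "P V" "P W" "T V = V" "T W = W"
  shows "V = W"
proof (rule agree_upto_all_eq)
  fix n show "agree_upto n V W"
  proof (induction n)
    case 0 show ?case using agree0 assms(3,4) .
  next
    case (Suc n) then show ?case using contract[OF assms(3,4) Suc] assms(5,6) by simp
  qed
qed

lemma contraction_fixpoint_exists:
  assumes contract: "\<And>V W n. P V \<Longrightarrow> P W \<Longrightarrow> agree_upto n V W \<Longrightarrow> agree_upto (Suc n) (T V) (T W)"
    and agree0: "\<And>V W. P V \<Longrightarrow> P W \<Longrightarrow> agree_upto 0 V W"
    and closed: "\<And>V S. (\<And>n. P (S n)) \<Longrightarrow> (\<And>n. agree_upto n V (S n)) \<Longrightarrow> P V"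
    and invariant: "\<And>V. P V \<Longrightarrow> P (T V)"
    and "P a"
  shows "\<exists>V. P V \<and> T V = V"
proof -
  define S where "S m = (T ^^ m) a" for m
  have S_Suc: "S (Suc m) = T (S m)" for m by (simp add: S_def)
  have P_S: "P (S m)" for m by (induction m) (simp_all add: S_def \<open>P a\<close> invariant)
  have cauchy: "agree_upto m (S m) (S (Suc m))" for m
  proof (induction m)
    case 0 show ?case using agree0 P_S by blast
  next
    case (Suc m) then show ?case using contract[OF P_S P_S Suc] by (simp add: S_Suc)
  qed
  define V where "V = (\<lambda>i. S i i)"
  have V_S: "agree_upto n V (S n)" for n
    unfolding V_def using agree_upto_diagonal[OF cauchy] .
  have "P V" using closed[of S V] P_S V_S by blast
  have step: "agree_upto (Suc n) (T V) V" for n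
  proof -
    have "agree_upto (Suc n) (T V) (S (Suc n))" using contract[OF \<open>P V\<close> P_S V_S] by (simp add: S_Suc)
    then show ?thesis using V_S[of "Suc n"] unfolding agree_upto_def by simp
  qed
  have "T V = V" by (rule agree_upto_all_eq, rule agree_upto_mono[OF step le_SucI[OF le_refl]])
  with \<open>P V\<close> show ?thesis by blast
qed

definition pos_order :: "ser \<Rightarrow> bool" where
  "pos_order a \<longleftrightarrow> (\<forall>k. a 0 k = 0)"

lemma mult_A_agree_upto:
  assumes "agree_upto n a b" "agree_upto n c d"
  shows "agree_upto n (mult_A a c) (mult_A b d)"
  using assms unfolding agree_upto_def mult_A_def by (auto intro!: sum.cong)

lemma pow_A_agree_upto:
  assumes "agree_upto n a b"
  shows "agree_upto n (pow_A a j) (pow_A b j)"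
proof (induction j)
  case 0 show ?case by (simp add: agree_upto_def)
next
  case Suc then show ?case by (simp add: mult_A_agree_upto assms)
qed

lemma pow_A_vanish:
  assumes "pos_order a" "m < j"
  shows "pow_A a j m k = 0"
  using assms(2)
proof (induction j arbitrary: m k)
  case 0 then show ?case by simp
next
  case (Suc j)
  have "a i l * pow_A a j (m - i) (k - l) = 0" if "i \<le> m" for i l
  proof (cases "i = 0")
    case True then show ?thesis using assms(1) unfolding pos_order_def by simp
  next
    case False then show ?thesis using Suc that by simp
  qed
  then show ?case unfolding pow_A.simps mult_A_def by (auto intro!: sum.neutral)
qed

lemma one_inA: "inA one_A"
  unfolding inA_def one_A_def by auto

lemma sub_A_inA: "inA a \<Longrightarrow> inA b \<Longrightarrow> inA (sub_A a b)"
  unfolding inA_def sub_A_def by auto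

lemma mult_A_inA:
  assumes "inA a" "inA b"
  shows "inA (mult_A a b)"
  unfolding inA_def mult_A_def
proof (intro allI impI)
  fix n k :: nat assume "n < k"
  have "a i j * b (n - i) (k - j) = 0" if "i \<le> n" "j \<le> k" for i j
  proof -
    have "i < j \<or> n - i < k - j" using that \<open>n < k\<close> by linarith
    then show ?thesis using assms unfolding inA_def by auto
  qed
  then show "(\<Sum>i\<le>n. \<Sum>j\<le>k. a i j * b (n - i) (k - j)) = 0" by (auto intro!: sum.neutral)
qed

lemma pow_A_inA: "inA a \<Longrightarrow> inA (pow_A a j)"
  by (induction j) (simp_all add: one_inA mult_A_inA)

text \<open>Since \<open>(V - 1)\<^sup>j\<close> has degree at least \<open>j\<close>, the coefficients of degree \<open>n\<close> of the partial sums
  are constant from the \<open>(n+1)\<close>-st partial sum on.\<close>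

lemma log_partial_stable:
  assumes "pos_order (sub_A V one_A)" "i < N"
  shows "log_partial V N i k = log_partial V (Suc i) i k"
  unfolding log_partial_def
proof (rule sum.mono_neutral_right)
  show "\<forall>j\<in>{1..N} - {1..Suc i}. (- 1) ^ (j + 1) / of_nat j * pow_A (sub_A V one_A) j i k = 0"
    using pow_A_vanish[OF assms(1)] by auto
qed (use assms in auto)

lemma log_A_eq:
  assumes "pos_order (sub_A V one_A)"
  shows "log_A V = (\<lambda>n k. log_partial V (Suc n) n k)"
proof -
  have "agree_upto n (log_partial V N) (\<lambda>n k. log_partial V (Suc n) n k)" if "n < N" for n N
    unfolding agree_upto_def using that by (auto intro!: log_partial_stable[OF assms])
  then have conv: "conv_A (log_partial V) (\<lambda>n k. log_partial V (Suc n) n k)"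
    unfolding conv_A_def by (meson Suc_le_lessD)
  show ?thesis
    unfolding log_A_def by (rule the_equality[where P = "conv_A (log_partial V)", OF conv])
      (rule conv_A_unique[OF _ conv])
qed

lemma log_A_agree_upto:
  assumes "pos_order (sub_A V one_A)" "pos_order (sub_A W one_A)" "agree_upto n V W"
  shows "agree_upto n (log_A V) (log_A W)"
proof -
  have "agree_upto n (sub_A V one_A) (sub_A W one_A)"
    using assms(3) unfolding agree_upto_def sub_A_def by auto
  from pow_A_agree_upto[OF this] show ?thesis
    unfolding log_A_eq[OF assms(1)] log_A_eq[OF assms(2)] agree_upto_def log_partial_def
    by (auto intro!: sum.cong)
qed

lemma log_A_inA:
  assumes "inA V" "pos_order (sub_A V one_A)"
  shows "inA (log_A V)"
  using pow_A_inA[OF sub_A_inA[OF assms(1) one_inA]]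
  unfolding log_A_eq[OF assms(2)] inA_def log_partial_def by (auto intro!: sum.neutral)

definition rhs_A :: "ser \<Rightarrow> ser" where
  "rhs_A V = add_A (sub_A (sub_A (sub_A (add_A one_A yx_A) (divx_A V)) (dx_A V)) (divx_A (dy_A V)))
              (divx_A (log_A V))"

lemma one_inU: "inU one_A"
  by (simp add: inU_def one_inA) (simp add: one_A_def)

lemma inU_pos_order: "inU V \<Longrightarrow> pos_order (sub_A V one_A)"
  unfolding inU_def inA_def pos_order_def sub_A_def one_A_def by auto

lemma inU_agree_upto_0:
  assumes "inU V" "inU W"
  shows "agree_upto 0 V W"
proof -
  have "V 0 k = W 0 k" for k
    using assms unfolding inU_def inA_def by (cases k) auto
  then show ?thesis unfolding agree_upto_def by simp
qed

lemma inU_closed: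
  assumes "\<And>n. inU (S n)" "\<And>n. agree_upto n V (S n)"
  shows "inU V"
proof -
  have "V n k = S n n k" for n k using assms(2)[of n] unfolding agree_upto_def by simp
  then show ?thesis using assms(1) unfolding inU_def inA_def by simp
qed

lemma rhs_A_0: "rhs_A V 0 k = one_A 0 k"
  unfolding rhs_A_def add_A_def sub_A_def divx_A_def dx_A_def yx_A_def by simp

lemma rhs_A_contract:
  assumes "inU V" "inU W" "agree_upto n V W"
  shows "agree_upto (Suc n) (rhs_A V) (rhs_A W)"
  unfolding agree_upto_def
proof (intro allI impI)
  fix i k assume "i \<le> Suc n"
  have log: "agree_upto n (log_A V) (log_A W)"
    using log_A_agree_upto[OF inU_pos_order[OF assms(1)] inU_pos_order[OF assms(2)] assms(3)] .
  show "rhs_A V i k = rhs_A W i k"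
  proof (cases i)
    case 0 then show ?thesis by (simp add: rhs_A_0)
  next
    case (Suc m)
    with \<open>i \<le> Suc n\<close> have "m \<le> n" by simp
    with Suc assms(3) log show ?thesis
      unfolding agree_upto_def rhs_A_def add_A_def sub_A_def divx_A_def dx_A_def dy_A_def by simp
  qed
qed

lemma rhs_A_inU:
  assumes "inU V"
  shows "inU (rhs_A V)"
proof -
  have V: "inA V" and log: "inA (log_A V)"
    using assms log_A_inA inU_pos_order unfolding inU_def by blast+
  have "rhs_A V n k = 0" if "n < k" for n k
  proof (cases n)
    case 0 with that show ?thesis by (simp add: rhs_A_0 one_A_def)
  next
    case (Suc m)
    with that have "V m k = 0" "V m (k + 1) = 0" "log_A V m k = 0"
      using V log unfolding inA_def by simp_all
    with Suc that show ?thesis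
      unfolding rhs_A_def add_A_def sub_A_def divx_A_def dx_A_def dy_A_def yx_A_def one_A_def by simp
  qed
  then show ?thesis unfolding inU_def inA_def by (simp add: rhs_A_0 one_A_def)
qed

theorem theorem4p1:
  shows "\<exists>!V. inU V \<and>
    V = add_A (sub_A (sub_A (sub_A (add_A one_A yx_A) (divx_A V)) (dx_A V)) (divx_A (dy_A V)))
              (divx_A (log_A V))"
  unfolding rhs_A_def[symmetric]
proof -
  have "\<exists>V. inU V \<and> rhs_A V = V"
    by (rule contraction_fixpoint_exists[of inU rhs_A one_A])
       (fact rhs_A_contract inU_agree_upto_0 inU_closed rhs_A_inU one_inU)+
  then obtain V where V: "inU V" "rhs_A V = V" by blast
  moreover have "X = V" if "inU X" "rhs_A X = X" for X
    by (rule contraction_fixpoint_unique[of inU rhs_A])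
       (fact rhs_A_contract inU_agree_upto_0 that V)+
  ultimately show "\<exists>!V. inU V \<and> V = rhs_A V" by metis
qed

end
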